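(* For any nonzero ring $R$ and any integer $n\ge 2$, the matrix ring $\mathrm{M}_n(R)$ is not a CSNC ring.
   Context: All rings are associative with identity $1$. For a ring $R$, $\mathrm{Id}(R)$, $U(R)$, $\mathrm{Nil}(R)$ denote the sets of idempotents, units and nilpotent elements. An element $a\in R$ is clean if $a=e+u$ for some $e\in\mathrm{Id}(R)$, $u\in U(R)$. An element $a$ is strongly nil-clean if $a=e+q$ with $e\in \mathrm{Id}(R)$, $q\in\mathrm{Nil}(R)$ and $eq=qe$. A ring $R$ is called CSNC if every clean element of $R$ is strongly nil-clean. *)

theory Defs
  imports "HOL-Algebra.Ring" "Jordan_Normal_Form.Matrix"
begin

definition idempotents :: "('a, 'b) ring_scheme \<Rightarrow> 'a set" where
  "idempotents R = {e \<in> carrier R. e \<otimes>\<^bsub>R\<^esub> e = e}"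

definition nilpotents :: "('a, 'b) ring_scheme \<Rightarrow> 'a set" where
  "nilpotents R = {q \<in> carrier R. \<exists>k::nat. q [^]\<^bsub>R\<^esub> k = \<zero>\<^bsub>R\<^esub>}"

definition clean_elem :: "('a, 'b) ring_scheme \<Rightarrow> 'a \<Rightarrow> bool" where
  "clean_elem R a \<longleftrightarrow> (\<exists>e \<in> idempotents R. \<exists>u \<in> Units R. a = e \<oplus>\<^bsub>R\<^esub> u)"

definition strongly_nil_clean_elem :: "('a, 'b) ring_scheme \<Rightarrow> 'a \<Rightarrow> bool" where
  "strongly_nil_clean_elem R a \<longleftrightarrow>
     (\<exists>e \<in> idempotents R. \<exists>q \<in> nilpotents R.
        a = e \<oplus>\<^bsub>R\<^esub> q \<and> e \<otimes>\<^bsub>R\<^esub> q = q \<otimes>\<^bsub>R\<^esub> e)"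

definition CSNC :: "('a, 'b) ring_scheme \<Rightarrow> bool" where
  "CSNC R \<longleftrightarrow> (\<forall>a \<in> carrier R. clean_elem R a \<longrightarrow> strongly_nil_clean_elem R a)"

end

theory Submission
  imports Defs
begin

text \<open>If \<open>a = e + q\<close> is strongly nil-clean then \<open>a\<^sup>2 - a\<close> is nilpotent. So a unit \<open>a\<close>
  (which is clean as \<open>0 + a\<close>) with \<open>a\<^sup>2 = a + f\<close> for a nonzero idempotent \<open>f\<close> violates CSNC.
  In \<open>M\<^sub>n(R)\<close> take \<open>a\<close> with upper-left corner \<open>[[0,1],[1,1]]\<close> and ones further down the
  diagonal; then \<open>f\<close> is the identity on the corner.\<close>

lemma (in ring) idempotent_nilpotent_eq_zero:
  assumes e: "e \<in> carrier R" "e \<otimes> e = e" and nil: "e [^] (k::nat) = \<zero>"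
  shows "e = \<zero>"
proof (cases k)
  case 0
  then have "\<one> = \<zero>" using nil by simp
  then show ?thesis using e by (metis r_one r_null)
next
  case (Suc m)
  have "e [^] Suc j = e" for j by (induction j) (use e in \<open>auto simp: m_assoc\<close>)
  then show ?thesis using nil Suc by simp
qed

text \<open>If \<open>a = e \<oplus> q\<close> with \<open>e\<close> idempotent commuting with \<open>q\<close>, then
  \<open>a\<^sup>2 \<ominus> a = q \<otimes> (e \<oplus> e \<oplus> q \<ominus> \<one>)\<close>, a product of commuting factors one of which is nilpotent.\<close>

lemma (in ring) strongly_nil_clean_imp_square_minus_nilpotent:
  assumes "strongly_nil_clean_elem R a"
  shows "a \<otimes> a \<ominus> a \<in> nilpotents R"
proof -
  obtain e q k where e: "e \<in> carrier R" "e \<otimes> e = e"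
    and q: "q \<in> carrier R" "q [^] (k::nat) = \<zero>"
    and a: "a = e \<oplus> q" and com: "e \<otimes> q = q \<otimes> e"
    using assms unfolding strongly_nil_clean_elem_def idempotents_def nilpotents_def by blast
  define c where "c = e \<oplus> e \<oplus> q \<ominus> \<one>"
  have c: "c \<in> carrier R" unfolding c_def using e q by simp
  have "a \<otimes> a = e \<oplus> q \<otimes> e \<oplus> q \<otimes> e \<oplus> q \<otimes> q"
    unfolding a using e q com by (simp add: l_distr r_distr a_ac)
  also have "\<dots> = a \<oplus> q \<otimes> c"
    unfolding a c_def using e q
    by (simp add: r_distr r_minus minus_eq a_ac, simp add: a_assoc[symmetric] r_neg)
  finally have qc_eq: "a \<otimes> a \<ominus> a = q \<otimes> c"
    using a e q c by (simp add: ring_simprules)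
  have qc_comm: "q \<otimes> c = c \<otimes> q"
    unfolding c_def using e q com by (simp add: l_distr r_distr l_minus r_minus minus_eq m_assoc)
  have "(q \<otimes> c) [^] k = \<zero>"
    using pow_mult_distrib[OF qc_comm q(1) c, of k] q c by simp
  then show ?thesis
    unfolding nilpotents_def qc_eq using q c by blast
qed

lemma (in ring) Units_clean_elem: "a \<in> Units R \<Longrightarrow> clean_elem R a"
  unfolding clean_elem_def idempotents_def by force

lemma (in ring) not_CSNC_if_Unit_square_eq_add_idempotent:
  assumes a: "a \<in> Units R" and f: "f \<in> idempotents R" "f \<noteq> \<zero>"
    and sq: "a \<otimes> a = a \<oplus> f"
  shows "\<not> CSNC R"
proof
  assume "CSNC R"
  then have "strongly_nil_clean_elem R a"
    using a Units_clean_elem unfolding CSNC_def by blast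
  then have "a \<otimes> a \<ominus> a \<in> nilpotents R"
    by (rule strongly_nil_clean_imp_square_minus_nilpotent)
  moreover have "a \<otimes> a \<ominus> a = f"
    using Units_closed[OF a] f sq unfolding idempotents_def
    by (simp add: a_comm[of a f] minus_eq a_assoc r_neg)
  ultimately show False
    using f idempotent_nilpotent_eq_zero unfolding idempotents_def nilpotents_def by blast
qed

lemma ring_ring_mat: "ring (ring_mat TYPE('a :: ring_1) n b)"
  by (unfold_locales, insert add_inv_exists_mat, auto simp: ring_mat_def algebra_simps Units_def)

definition corner_mat :: "nat \<Rightarrow> (nat \<Rightarrow> nat \<Rightarrow> 'a::ring_1) \<Rightarrow> 'a \<Rightarrow> 'a mat" where
  "corner_mat n M d = mat n n (\<lambda>(i,j). if i < 2 \<and> j < 2 then M i j else if i = j then d else 0)"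

lemma corner_mat_carrier [simp]: "corner_mat n M d \<in> carrier_mat n n"
  by (simp add: corner_mat_def)

lemma corner_mat_cong:
  "(\<And>i j. i < 2 \<Longrightarrow> j < 2 \<Longrightarrow> M i j = N i j) \<Longrightarrow> d = e \<Longrightarrow> corner_mat n M d = corner_mat n N e"
  unfolding corner_mat_def by (rule cong_mat) auto

lemma one_mat_eq_corner_mat: "1\<^sub>m n = corner_mat n (\<lambda>i j. if i = j then 1 else 0) 1"
  by (rule eq_matI) (auto simp: corner_mat_def)

lemma corner_mat_add: "corner_mat n M d + corner_mat n N e = corner_mat n (\<lambda>i j. M i j + N i j) (d + e)"
  by (rule eq_matI) (auto simp: corner_mat_def)

lemma corner_mat_mult:
  assumes n: "2 \<le> n"
  shows "corner_mat n M d * corner_mat n N e = corner_mat n (\<lambda>i j. M i 0 * N 0 j + M i 1 * N 1 j) (d * e)"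
proof (rule eq_matI)
  fix i j assume i: "i < dim_row (corner_mat n (\<lambda>i j. M i 0 * N 0 j + M i 1 * N 1 j) (d * e))"
    and j: "j < dim_col (corner_mat n (\<lambda>i j. M i 0 * N 0 j + M i 1 * N 1 j) (d * e))"
  let ?g = "\<lambda>k. corner_mat n M d $$ (i,k) * corner_mat n N e $$ (k,j)"
  have "(corner_mat n M d * corner_mat n N e) $$ (i,j) = (\<Sum>k<n. ?g k)"
    using i j by (simp add: corner_mat_def scalar_prod_def lessThan_atLeast0)
  also have "\<dots> = (\<Sum>k \<in> (if i < 2 then {0,1} else {i}). ?g k)"
    by (rule sum.mono_neutral_right) (use i j n in \<open>auto simp: corner_mat_def\<close>)
  also have "\<dots> = corner_mat n (\<lambda>i j. M i 0 * N 0 j + M i 1 * N 1 j) (d * e) $$ (i,j)"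
    using i j n by (auto simp: corner_mat_def)
  finally show "(corner_mat n M d * corner_mat n N e) $$ (i,j) = \<dots>" .
qed (simp_all add: corner_mat_def)

theorem mainTheorem17:
  fixes n :: nat
  assumes "(0::'a::ring_1) \<noteq> 1"
    and "n \<ge> 2"
  shows "\<not> CSNC (ring_mat TYPE('a) n ())"
proof -
  let ?R = "ring_mat TYPE('a) n ()"
  interpret R: ring ?R by (rule ring_ring_mat)
  define a where "a = corner_mat n (\<lambda>i j. if i = 0 \<and> j = 0 then 0 else (1::'a)) 1"
  define b where "b = corner_mat n (\<lambda>i j. if i = 0 \<and> j = 0 then -1 else if i = 1 \<and> j = 1 then 0 else (1::'a)) 1"
  define f where "f = corner_mat n (\<lambda>i j. if i = j then 1 else (0::'a)) 0"
  have ab: "a * b = 1\<^sub>m n" "b * a = 1\<^sub>m n"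
    unfolding a_def b_def one_mat_eq_corner_mat corner_mat_mult[OF \<open>n \<ge> 2\<close>]
    by (auto intro: corner_mat_cong)
  have ff: "f * f = f"
    unfolding f_def corner_mat_mult[OF \<open>n \<ge> 2\<close>] by (auto intro: corner_mat_cong)
  have "a \<in> Units ?R"
    using ab unfolding Units_def by (auto simp: ring_mat_simps a_def b_def intro: exI[of _ b])
  moreover have "f \<in> idempotents ?R"
    using ff unfolding idempotents_def by (simp add: ring_mat_simps f_def)
  moreover have "f \<noteq> \<zero>\<^bsub>?R\<^esub>"
  proof
    assume "f = \<zero>\<^bsub>?R\<^esub>"
    then have "f $$ (0,0) = (0\<^sub>m n n :: 'a mat) $$ (0,0)" by (simp add: ring_mat_simps)
    then show False using assms by (simp add: f_def corner_mat_def)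
  qed
  moreover have "a \<otimes>\<^bsub>?R\<^esub> a = a \<oplus>\<^bsub>?R\<^esub> f"
    unfolding ring_mat_simps a_def f_def
    unfolding corner_mat_add corner_mat_mult[OF \<open>n \<ge> 2\<close>]
    by (auto intro: corner_mat_cong)
  ultimately show ?thesis by (rule R.not_CSNC_if_Unit_square_eq_add_idempotent)
qed

end
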